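(* For all integers $n$ and $\alpha$ with $n\le\alpha\le 2^n$, there exists a minimal $n$-state nondeterministic finite automaton accepting a star-free language whose equivalent minimal deterministic finite automaton has exactly $\alpha$ states.
   Context: Nondeterministic finite automata (NFAs) have a single initial state and a transition function $\delta:Q\times\Sigma\to 2^Q$ that may map to the empty set; a non-accepting sink state is not needed and not counted for NFAs. Deterministic finite automata (DFAs) are complete (every state has exactly one successor on every letter), so a sink state is counted. A minimal $n$-state NFA is an NFA with $n$ states such that no NFA with fewer states accepts the same language. A language $L\subseteq\Sigma^*$ is star-free if it can be obtained from the languages $\{a\}$, $a\in\Sigma$, by finitely many applications of union, complementation (with respect to $\Sigma^*$), and concatenation. *)

theory Defs
  imports Main
begin

definition conc :: "'a list set \<Rightarrow> 'a list set \<Rightarrow> 'a list set" where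
  "conc A B = {u @ v | u v. u \<in> A \<and> v \<in> B}"

inductive star_free :: "'a set \<Rightarrow> 'a list set \<Rightarrow> bool" for Al :: "'a set" where
  sf_letter: "a \<in> Al \<Longrightarrow> star_free Al {[a]}"
| sf_union: "star_free Al A \<Longrightarrow> star_free Al B \<Longrightarrow> star_free Al (A \<union> B)"
| sf_compl: "star_free Al A \<Longrightarrow> star_free Al (lists Al - A)"
| sf_conc: "star_free Al A \<Longrightarrow> star_free Al B \<Longrightarrow> star_free Al (conc A B)"

record ('s, 'a) nfa =
  nstates :: "'s set"
  ninit :: 's
  ndelta :: "'s \<Rightarrow> 'a \<Rightarrow> 's set"
  nfinal :: "'s set"

definition nfa_wf :: "'a set \<Rightarrow> ('s, 'a) nfa \<Rightarrow> bool" where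
  "nfa_wf Al N \<longleftrightarrow> finite (nstates N) \<and> ninit N \<in> nstates N \<and> nfinal N \<subseteq> nstates N
     \<and> (\<forall>q \<in> nstates N. \<forall>a \<in> Al. ndelta N q a \<subseteq> nstates N)"

fun nfa_steps :: "('s, 'a) nfa \<Rightarrow> 's set \<Rightarrow> 'a list \<Rightarrow> 's set" where
  "nfa_steps N S [] = S"
| "nfa_steps N S (a # w) = nfa_steps N (\<Union>q \<in> S. ndelta N q a) w"

definition nfa_lang :: "'a set \<Rightarrow> ('s, 'a) nfa \<Rightarrow> 'a list set" where
  "nfa_lang Al N = {w \<in> lists Al. nfa_steps N {ninit N} w \<inter> nfinal N \<noteq> {}}"

definition nfa_minimal :: "'a set \<Rightarrow> (nat, 'a) nfa \<Rightarrow> bool" where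
  "nfa_minimal Al N \<longleftrightarrow> nfa_wf Al N \<and>
     (\<forall>N' :: (nat, 'a) nfa. nfa_wf Al N' \<and> nfa_lang Al N' = nfa_lang Al N
        \<longrightarrow> card (nstates N) \<le> card (nstates N'))"

record ('s, 'a) dfa =
  dstates :: "'s set"
  dinit :: 's
  ddelta :: "'s \<Rightarrow> 'a \<Rightarrow> 's"
  dfinal :: "'s set"

definition dfa_wf :: "'a set \<Rightarrow> ('s, 'a) dfa \<Rightarrow> bool" where
  "dfa_wf Al D \<longleftrightarrow> finite (dstates D) \<and> dinit D \<in> dstates D \<and> dfinal D \<subseteq> dstates D
     \<and> (\<forall>q \<in> dstates D. \<forall>a \<in> Al. ddelta D q a \<in> dstates D)"

definition dfa_lang :: "'a set \<Rightarrow> ('s, 'a) dfa \<Rightarrow> 'a list set" where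
  "dfa_lang Al D = {w \<in> lists Al. foldl (ddelta D) (dinit D) w \<in> dfinal D}"

definition dfa_minimal :: "'a set \<Rightarrow> (nat, 'a) dfa \<Rightarrow> bool" where
  "dfa_minimal Al D \<longleftrightarrow> dfa_wf Al D \<and>
     (\<forall>D' :: (nat, 'a) dfa. dfa_wf Al D' \<and> dfa_lang Al D' = dfa_lang Al D
        \<longrightarrow> card (dstates D) \<le> card (dstates D'))"

end

theory Submission
  imports Defs "HOL-Library.Nat_Bijection"
begin

text \<open>Both witnesses are minimal NFAs by a fooling-set argument, and their minimal DFAs are
  subset automata restricted to a family R of reachable, pairwise distinguishable sets of states,
  so the DFA has exactly card R states. For \<alpha> = n a unary chain 0, 1, ..., n - 1 with a loop at
  the last state suffices, with R the singletons. For \<alpha> > n the NFA reads letter i from state i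
  to i + 1, and has one extra letter for every set S of a family F of sets with at least two
  states, leading from 0 to S. Its reachable sets are the empty set, the singletons and F, so
  \<alpha> = n + 1 + card F, which covers every \<alpha> up to 2^n. Only state 0 has infinitely many
  accepting continuations, so the language is C* V with V finite, hence star-free.\<close>

lemma nfa_steps_append: "nfa_steps N S (u @ v) = nfa_steps N (nfa_steps N S u) v"
  by (induction u arbitrary: S) auto

lemma nfa_steps_UN: "nfa_steps N S w = (\<Union>q\<in>S. nfa_steps N {q} w)"
proof (induction w arbitrary: S)
  case (Cons a w)
  have "nfa_steps N S (a # w) = (\<Union>p\<in>(\<Union>q\<in>S. ndelta N q a). nfa_steps N {p} w)"
    by (simp only: nfa_steps.simps Cons.IH[of "\<Union>q\<in>S. ndelta N q a"])
  also have "\<dots> = (\<Union>q\<in>S. \<Union>p\<in>ndelta N q a. nfa_steps N {p} w)"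
    by (rule UN_UN_flatten)
  also have "\<dots> = (\<Union>q\<in>S. nfa_steps N {q} (a # w))"
    by (simp add: Cons.IH[of "ndelta N _ a", symmetric])
  finally show ?case .
qed simp

lemma nfa_steps_empty [simp]: "nfa_steps N {} w = {}"
  by (induction w) auto

lemma nfa_steps_subset:
  assumes "nfa_wf Al N" "S \<subseteq> nstates N" "w \<in> lists Al"
  shows "nfa_steps N S w \<subseteq> nstates N"
  using assms(2,3)
proof (induction w arbitrary: S)
  case (Cons a w)
  have "a \<in> Al" "w \<in> lists Al" using Cons.prems(2) by simp_all
  then have "(\<Union>q\<in>S. ndelta N q a) \<subseteq> nstates N"
    using assms(1) Cons.prems(1) unfolding nfa_wf_def by blast
  then show ?case using Cons.IH \<open>w \<in> lists Al\<close> by simp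
qed simp

definition nfa_accepts_from :: "('s, 'a) nfa \<Rightarrow> 's set \<Rightarrow> 'a list \<Rightarrow> bool" where
  "nfa_accepts_from N T w \<longleftrightarrow> nfa_steps N T w \<inter> nfinal N \<noteq> {}"

lemma nfa_lang_accepts_from: "nfa_lang Al N = {w \<in> lists Al. nfa_accepts_from N {ninit N} w}"
  by (simp add: nfa_lang_def nfa_accepts_from_def)

lemma nfa_accepts_from_Nil [simp]: "nfa_accepts_from N T [] \<longleftrightarrow> T \<inter> nfinal N \<noteq> {}"
  and nfa_accepts_from_Cons [simp]:
    "nfa_accepts_from N T (a # w) \<longleftrightarrow> nfa_accepts_from N (\<Union>q\<in>T. ndelta N q a) w"
  by (simp_all add: nfa_accepts_from_def)

lemma nfa_accepts_from_empty [simp]: "\<not> nfa_accepts_from N {} w"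
  by (simp add: nfa_accepts_from_def)

lemma nfa_accepts_from_append:
  "nfa_accepts_from N T (u @ v) \<longleftrightarrow> nfa_accepts_from N (nfa_steps N T u) v"
  by (simp add: nfa_accepts_from_def nfa_steps_append)

lemma nfa_accepts_from_iff: "nfa_accepts_from N T w \<longleftrightarrow> (\<exists>q\<in>T. nfa_accepts_from N {q} w)"
  by (subst nfa_accepts_from_def, subst nfa_steps_UN) (auto simp: nfa_accepts_from_def)

section \<open>Lower bounds on the number of states\<close>

lemma fooling_set_le_card_nstates:
  assumes wf: "nfa_wf Al N"
    and mem: "\<And>i. i < n \<Longrightarrow> x i @ y i \<in> nfa_lang Al N"
    and fool: "\<And>i j. i < n \<Longrightarrow> j < n \<Longrightarrow> i \<noteq> j \<Longrightarrow>
      x i @ y j \<notin> nfa_lang Al N \<or> x j @ y i \<notin> nfa_lang Al N"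
  shows "n \<le> card (nstates N)"
proof -
  let ?mid = "\<lambda>i q. q \<in> nfa_steps N {ninit N} (x i) \<and> nfa_accepts_from N {q} (y i)"
  have "\<exists>q. ?mid i q" if "i < n" for i
    using mem[OF that] nfa_accepts_from_iff[of N "nfa_steps N {ninit N} (x i)"]
    by (auto simp: nfa_lang_accepts_from nfa_accepts_from_append)
  then obtain f where f: "\<And>i. i < n \<Longrightarrow> ?mid i (f i)" by metis
  have "f ` {..<n} \<subseteq> nstates N"
  proof clarify
    fix i assume "i < n"
    moreover have "nfa_steps N {ninit N} (x i) \<subseteq> nstates N"
      using nfa_steps_subset[OF wf] mem[OF \<open>i < n\<close>] wf by (auto simp: nfa_lang_def nfa_wf_def)
    ultimately show "f i \<in> nstates N" using f by blast
  qed
  moreover have "inj_on f {..<n}"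
  proof (rule inj_onI, rule ccontr)
    fix i j assume ij: "i \<in> {..<n}" "j \<in> {..<n}" "f i = f j" "i \<noteq> j"
    have "x i @ y j \<in> nfa_lang Al N" if "i < n" "j < n" "f i = f j" for i j
    proof -
      have "x i \<in> lists Al" "y j \<in> lists Al"
        using mem[OF that(1)] mem[OF that(2)] by (auto simp: nfa_lang_def)
      then show ?thesis using f[OF that(1)] f[OF that(2)] that(3)
        using nfa_accepts_from_iff[of N "nfa_steps N {ninit N} (x i)"]
        by (auto simp: nfa_lang_accepts_from nfa_accepts_from_append)
    qed
    then show False using ij fool[of i j] by auto
  qed
  moreover have "finite (nstates N)" using wf by (simp add: nfa_wf_def)
  ultimately show ?thesis using card_inj_on_le[of f "{..<n}"] by simp
qed

lemma foldl_ddelta_in_dstates: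
  "dfa_wf Al D \<Longrightarrow> q \<in> dstates D \<Longrightarrow> w \<in> lists Al \<Longrightarrow> foldl (ddelta D) q w \<in> dstates D"
  by (induction w arbitrary: q) (auto simp: dfa_wf_def)

lemma distinguishable_card_le_dstates:
  assumes wf: "dfa_wf Al D" and W: "W \<subseteq> lists Al"
    and dist: "\<And>u v. u \<in> W \<Longrightarrow> v \<in> W \<Longrightarrow> u \<noteq> v \<Longrightarrow>
      \<exists>z\<in>lists Al. (u @ z \<in> dfa_lang Al D) \<noteq> (v @ z \<in> dfa_lang Al D)"
  shows "card W \<le> card (dstates D)"
proof -
  let ?run = "foldl (ddelta D) (dinit D)"
  have "?run ` W \<subseteq> dstates D"
    using foldl_ddelta_in_dstates[OF wf] wf W by (auto simp: dfa_wf_def)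
  moreover have "inj_on ?run W"
  proof (rule inj_onI, rule ccontr)
    fix u v assume "u \<in> W" "v \<in> W" "?run u = ?run v" "u \<noteq> v"
    then show False using dist[of u v] W by (auto simp: dfa_lang_def)
  qed
  moreover have "finite (dstates D)" using wf by (simp add: dfa_wf_def)
  ultimately show ?thesis by (simp add: card_inj_on_le)
qed

section \<open>Subset automata on a closed family of sets\<close>

definition subset_dfa :: "(nat, 'a) nfa \<Rightarrow> nat set set \<Rightarrow> (nat, 'a) dfa" where
  "subset_dfa N R = \<lparr>dstates = set_encode ` R, dinit = set_encode {ninit N},
     ddelta = (\<lambda>q a. set_encode (\<Union>p\<in>set_decode q. ndelta N p a)),
     dfinal = set_encode ` {T \<in> R. T \<inter> nfinal N \<noteq> {}}\<rparr>"

context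
  fixes Al :: "'a set" and N :: "(nat, 'a) nfa" and R :: "nat set set"
  assumes wf: "nfa_wf Al N"
    and R_subset: "R \<subseteq> Pow (nstates N)"
    and init_in_R: "{ninit N} \<in> R"
    and R_closed: "\<And>T a. T \<in> R \<Longrightarrow> a \<in> Al \<Longrightarrow> (\<Union>q\<in>T. ndelta N q a) \<in> R"
begin

lemma finite_of_R: "T \<in> R \<Longrightarrow> finite T"
  using R_subset wf by (auto simp: nfa_wf_def intro: finite_subset)

lemma inj_on_set_encode_R: "inj_on set_encode R"
  using inj_on_set_encode finite_of_R by (auto intro: inj_on_subset)

lemma foldl_subset_dfa:
  assumes "T \<in> R" "w \<in> lists Al"
  shows "foldl (ddelta (subset_dfa N R)) (set_encode T) w = set_encode (nfa_steps N T w)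
    \<and> nfa_steps N T w \<in> R"
  using assms
proof (induction w arbitrary: T)
  case (Cons a w)
  then show ?case using R_closed[of T a] finite_of_R by (simp add: subset_dfa_def)
qed simp

lemma subset_dfa_wf: "dfa_wf Al (subset_dfa N R)"
proof -
  have "finite R" using R_subset wf by (auto simp: nfa_wf_def intro: finite_subset)
  then show ?thesis
    using imageI[OF init_in_R, of set_encode] R_closed finite_of_R
    by (auto simp: dfa_wf_def subset_dfa_def simp del: set_encode_insert)
qed

lemma dfa_lang_subset_dfa: "dfa_lang Al (subset_dfa N R) = nfa_lang Al N"
proof -
  have "foldl (ddelta (subset_dfa N R)) (dinit (subset_dfa N R)) w \<in> dfinal (subset_dfa N R)
      \<longleftrightarrow> nfa_accepts_from N {ninit N} w" if "w \<in> lists Al" for w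
  proof -
    have "foldl (ddelta (subset_dfa N R)) (dinit (subset_dfa N R)) w
        = set_encode (nfa_steps N {ninit N} w)" "nfa_steps N {ninit N} w \<in> R"
      using foldl_subset_dfa[OF init_in_R that]
      by (simp_all add: subset_dfa_def del: set_encode_insert)
    then show ?thesis
      using inj_on_image_mem_iff[OF inj_on_set_encode_R, of _ "{T \<in> R. T \<inter> nfinal N \<noteq> {}}"]
      by (simp add: subset_dfa_def nfa_accepts_from_def)
  qed
  then show ?thesis by (auto simp: dfa_lang_def nfa_lang_accepts_from)
qed

lemma card_dstates_subset_dfa: "card (dstates (subset_dfa N R)) = card R"
  by (simp add: subset_dfa_def card_image inj_on_set_encode_R)

lemma subset_dfa_minimal:
  assumes reach: "\<And>T. T \<in> R \<Longrightarrow> \<exists>w\<in>lists Al. nfa_steps N {ninit N} w = T"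
    and dist: "\<And>T T'. T \<in> R \<Longrightarrow> T' \<in> R \<Longrightarrow> T \<noteq> T' \<Longrightarrow>
      \<exists>z\<in>lists Al. nfa_accepts_from N T z \<noteq> nfa_accepts_from N T' z"
  shows "dfa_minimal Al (subset_dfa N R)"
  unfolding dfa_minimal_def
proof (intro conjI allI impI subset_dfa_wf)
  fix D :: "(nat, 'a) dfa" assume D: "dfa_wf Al D \<and> dfa_lang Al D = dfa_lang Al (subset_dfa N R)"
  obtain g where g: "\<And>T. T \<in> R \<Longrightarrow> g T \<in> lists Al \<and> nfa_steps N {ninit N} (g T) = T"
    using reach by metis
  have "inj_on g R" by (metis g inj_onI)
  then have "card R = card (g ` R)" by (simp add: card_image)
  also have "\<dots> \<le> card (dstates D)"
  proof (rule distinguishable_card_le_dstates)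
    show "g ` R \<subseteq> lists Al" using g by auto
  next
    fix u v assume "u \<in> g ` R" "v \<in> g ` R" "u \<noteq> v"
    then obtain T T' where TT': "T \<in> R" "T' \<in> R" "T \<noteq> T'" "u = g T" "v = g T'" by auto
    then obtain z where z: "z \<in> lists Al" "nfa_accepts_from N T z \<noteq> nfa_accepts_from N T' z"
      using dist by blast
    have "u @ z \<in> dfa_lang Al D \<longleftrightarrow> nfa_accepts_from N T z"
      "v @ z \<in> dfa_lang Al D \<longleftrightarrow> nfa_accepts_from N T' z"
      using D TT' g z(1)
      by (simp_all add: dfa_lang_subset_dfa nfa_lang_accepts_from nfa_accepts_from_append)
    with z show "\<exists>z\<in>lists Al. (u @ z \<in> dfa_lang Al D) \<noteq> (v @ z \<in> dfa_lang Al D)" by auto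
  qed (use D in simp)
  finally show "card (dstates (subset_dfa N R)) \<le> card (dstates D)"
    by (simp add: card_dstates_subset_dfa)
qed

end

section \<open>Star-free languages\<close>

lemma conc_Cons_lists:
  "a # w \<in> conc (lists C) V \<longleftrightarrow> a # w \<in> V \<or> (a \<in> C \<and> w \<in> conc (lists C) V)"
proof
  assume "a # w \<in> conc (lists C) V"
  then obtain u v where "a # w = u @ v" "u \<in> lists C" "v \<in> V" by (auto simp: conc_def)
  then show "a # w \<in> V \<or> (a \<in> C \<and> w \<in> conc (lists C) V)"
    by (cases u) (auto simp: conc_def)
next
  assume "a # w \<in> V \<or> (a \<in> C \<and> w \<in> conc (lists C) V)"
  then show "a # w \<in> conc (lists C) V"
  proof
    assume "a \<in> C \<and> w \<in> conc (lists C) V"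
    then obtain u v where "a \<in> C" "w = u @ v" "u \<in> lists C" "v \<in> V" by (auto simp: conc_def)
    then show ?thesis unfolding conc_def by (intro CollectI exI[of _ "a # u"] exI[of _ v]) simp
  next
    assume "a # w \<in> V"
    then show ?thesis unfolding conc_def by (intro CollectI exI[of _ "[]"] exI[of _ "a # w"]) simp
  qed
qed

lemma conc_letters: "conc ((\<lambda>a. [a]) ` A) L = {a # w | a w. a \<in> A \<and> w \<in> L}"
proof (intro set_eqI iffI)
  fix x assume "x \<in> {a # w | a w. a \<in> A \<and> w \<in> L}"
  then obtain a w where "x = [a] @ w" "a \<in> A" "w \<in> L" by auto
  then show "x \<in> conc ((\<lambda>a. [a]) ` A) L" unfolding conc_def by blast
qed (auto simp: conc_def)

lemma conc_subset_lists:
  assumes "A \<subseteq> lists Al" "B \<subseteq> lists Al"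
  shows "conc A B \<subseteq> lists Al"
proof
  fix w assume "w \<in> conc A B"
  then obtain u v where "w = u @ v" "u \<in> A" "v \<in> B" by (auto simp: conc_def)
  moreover have "u \<in> lists Al" "v \<in> lists Al"
    using assms subsetD \<open>u \<in> A\<close> \<open>v \<in> B\<close> by blast+
  ultimately show "w \<in> lists Al" by simp
qed

lemma Nil_in_conc_lists: "[] \<in> conc (lists C) V \<longleftrightarrow> [] \<in> V"
  by (auto simp: conc_def)

context
  fixes Al :: "'a set"
  assumes finite_Al: "finite Al" and Al_nonempty: "Al \<noteq> {}"
begin

lemma star_free_lists_alphabet: "star_free Al (lists Al)"
proof -
  obtain a where "a \<in> Al" using Al_nonempty by blast
  then have "star_free Al ((lists Al - {[a]}) \<union> {[a]})" by (intro sf_union sf_compl sf_letter)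
  moreover have "(lists Al - {[a]}) \<union> {[a]} = lists Al" using \<open>a \<in> Al\<close> by auto
  ultimately show ?thesis by simp
qed

lemma star_free_empty: "star_free Al {}"
  using sf_compl[OF star_free_lists_alphabet] by simp

lemma star_free_letters:
  assumes "B \<subseteq> Al"
  shows "star_free Al ((\<lambda>a. [a]) ` B)"
proof -
  have "finite B" using assms finite_Al by (rule finite_subset)
  then show ?thesis using assms
  proof (induction B rule: finite_induct)
    case (insert b B)
    then have "star_free Al ({[b]} \<union> (\<lambda>a. [a]) ` B)" by (intro sf_union sf_letter) auto
    then show ?case by simp
  qed (simp add: star_free_empty)
qed

lemma star_free_Nil: "star_free Al {[]}"
proof -
  have "{[]} = lists Al - conc ((\<lambda>a. [a]) ` Al) (lists Al)"
    by (auto simp: conc_letters neq_Nil_conv)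
  moreover have "star_free Al (lists Al - conc ((\<lambda>a. [a]) ` Al) (lists Al))"
    by (intro sf_compl sf_conc star_free_letters star_free_lists_alphabet) simp
  ultimately show ?thesis by simp
qed

lemma star_free_singleton: "w \<in> lists Al \<Longrightarrow> star_free Al {w}"
proof (induction w)
  case (Cons b w)
  then have "star_free Al (conc {[b]} {w})" by (intro sf_conc sf_letter) auto
  moreover have "conc {[b]} {w} = {b # w}" by (auto simp: conc_def)
  ultimately show ?case by simp
qed (rule star_free_Nil)

lemma star_free_finite: "finite W \<Longrightarrow> W \<subseteq> lists Al \<Longrightarrow> star_free Al W"
proof (induction W rule: finite_induct)
  case (insert w W)
  then have "star_free Al ({w} \<union> W)" by (intro sf_union star_free_singleton) auto
  then show ?case by simp
qed (rule star_free_empty)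

lemma star_free_lists: "B \<subseteq> Al \<Longrightarrow> star_free Al (lists B)"
proof -
  assume "B \<subseteq> Al"
  let ?bad = "conc (lists Al) (conc ((\<lambda>a. [a]) ` (Al - B)) (lists Al))"
  have "?bad = {w \<in> lists Al. \<exists>b \<in> set w. b \<notin> B}"
    unfolding conc_letters by (auto simp: conc_def in_set_conv_decomp; blast)
  then have "lists B = lists Al - ?bad" using \<open>B \<subseteq> Al\<close> by auto
  moreover have "star_free Al (lists Al - ?bad)"
    by (intro sf_compl sf_conc star_free_letters star_free_lists_alphabet) auto
  ultimately show ?thesis by simp
qed

end

text \<open>Splitting off the loops at the initial state p, the accepted words are C* V, where C collects
  the letters looping at p and V the accepted words whose run leaves p at once. If every other
  state accepts only finitely many words, then V is finite and the language is star-free.\<close>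
lemma star_free_nfa_lang_if_finite_from_others:
  fixes N :: "('s, 'a) nfa"
  assumes "finite Al" "Al \<noteq> {}" and wf: "nfa_wf Al N"
    and finite_from: "\<And>q. q \<in> nstates N \<Longrightarrow> q \<noteq> ninit N \<Longrightarrow>
      finite {w \<in> lists Al. nfa_accepts_from N {q} w}"
  shows "star_free Al (nfa_lang Al N)"
proof -
  define p where "p = ninit N"
  define C where "C = {a \<in> Al. p \<in> ndelta N p a}"
  define U where "U = (\<Union>a\<in>Al. \<Union>q\<in>ndelta N p a - {p}.
    Cons a ` {w \<in> lists Al. nfa_accepts_from N {q} w})"
  define V where "V = {w. w = [] \<and> p \<in> nfinal N} \<union> U"
  have U: "a # w \<in> U \<longleftrightarrow>
      a \<in> Al \<and> w \<in> lists Al \<and> (\<exists>q\<in>ndelta N p a - {p}. nfa_accepts_from N {q} w)" for a w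
    by (auto simp: U_def)
  have lang: "nfa_accepts_from N {p} w \<longleftrightarrow> w \<in> conc (lists C) V" if "w \<in> lists Al" for w
    using that
  proof (induction w)
    case Nil
    then show ?case by (auto simp: Nil_in_conc_lists V_def U_def)
  next
    case (Cons a w)
    then have "a \<in> Al" "w \<in> lists Al" by simp_all
    have "nfa_accepts_from N {p} (a # w) \<longleftrightarrow> (\<exists>q\<in>ndelta N p a. nfa_accepts_from N {q} w)"
      by (simp add: nfa_accepts_from_iff[of _ "ndelta _ _ _"])
    also have "\<dots> \<longleftrightarrow> (a \<in> C \<and> nfa_accepts_from N {p} w) \<or> a # w \<in> V"
      using \<open>a \<in> Al\<close> \<open>w \<in> lists Al\<close> by (auto simp: C_def V_def U)
    also have "\<dots> \<longleftrightarrow> a # w \<in> conc (lists C) V"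
      unfolding conc_Cons_lists using Cons.IH \<open>w \<in> lists Al\<close> by blast
    finally show ?case .
  qed
  have "ninit N \<in> nstates N" and delta: "\<And>a. a \<in> Al \<Longrightarrow> ndelta N p a \<subseteq> nstates N"
    using wf by (auto simp: nfa_wf_def p_def)
  have "finite U"
    unfolding U_def
  proof (intro finite_UN_I finite_imageI)
    show "finite Al" by fact
    fix a q assume "a \<in> Al" "q \<in> ndelta N p a - {p}"
    then show "finite {w \<in> lists Al. nfa_accepts_from N {q} w}"
      using finite_from delta by (auto simp: p_def)
  next
    fix a assume "a \<in> Al"
    then show "finite (ndelta N p a - {p})"
      using delta wf by (auto simp: nfa_wf_def intro: finite_subset)
  qed
  then have "finite V" by (simp add: V_def)
  have "V \<subseteq> lists Al" by (auto simp: V_def U_def)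
  have "C \<subseteq> Al" by (auto simp: C_def)
  have "conc (lists C) V \<subseteq> lists Al"
    using lists_mono[OF \<open>C \<subseteq> Al\<close>] \<open>V \<subseteq> lists Al\<close> by (rule conc_subset_lists)
  then have "nfa_lang Al N = conc (lists C) V"
    using lang unfolding nfa_lang_accepts_from p_def by blast
  moreover have "star_free Al (conc (lists C) V)"
    using assms(1,2) \<open>finite V\<close> \<open>V \<subseteq> lists Al\<close> \<open>C \<subseteq> Al\<close>
    by (intro sf_conc star_free_lists star_free_finite)
  ultimately show ?thesis by simp
qed

section \<open>The witnesses\<close>

definition star_free_realizable :: "nat \<Rightarrow> nat \<Rightarrow> bool" where
  "star_free_realizable n \<alpha> \<longleftrightarrow> (\<exists>(Al :: nat set) (N :: (nat, nat) nfa) (D :: (nat, nat) dfa).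
     finite Al \<and> Al \<noteq> {} \<and> nfa_minimal Al N \<and> card (nstates N) = n \<and>
     star_free Al (nfa_lang Al N) \<and>
     dfa_minimal Al D \<and> dfa_lang Al D = nfa_lang Al N \<and> card (dstates D) = \<alpha>)"

lemma star_free_realizableI:
  fixes N :: "(nat, nat) nfa"
  assumes "finite Al" "Al \<noteq> {}" and wf: "nfa_wf Al N"
    and sf: "star_free Al (nfa_lang Al N)"
    and mem: "\<And>i. i < card (nstates N) \<Longrightarrow> x i @ y i \<in> nfa_lang Al N"
    and fool: "\<And>i j. i < card (nstates N) \<Longrightarrow> j < card (nstates N) \<Longrightarrow> i \<noteq> j \<Longrightarrow>
      x i @ y j \<notin> nfa_lang Al N \<or> x j @ y i \<notin> nfa_lang Al N"
    and family: "R \<subseteq> Pow (nstates N)" "{ninit N} \<in> R"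
      "\<And>T a. T \<in> R \<Longrightarrow> a \<in> Al \<Longrightarrow> (\<Union>q\<in>T. ndelta N q a) \<in> R"
    and reach: "\<And>T. T \<in> R \<Longrightarrow> \<exists>w\<in>lists Al. nfa_steps N {ninit N} w = T"
    and dist: "\<And>T T'. T \<in> R \<Longrightarrow> T' \<in> R \<Longrightarrow> T \<noteq> T' \<Longrightarrow>
      \<exists>z\<in>lists Al. nfa_accepts_from N T z \<noteq> nfa_accepts_from N T' z"
  shows "star_free_realizable (card (nstates N)) (card R)"
proof -
  have "nfa_minimal Al N"
    unfolding nfa_minimal_def
  proof (intro conjI allI impI wf)
    fix N' :: "(nat, nat) nfa" assume "nfa_wf Al N' \<and> nfa_lang Al N' = nfa_lang Al N"
    then show "card (nstates N) \<le> card (nstates N')"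
      using fooling_set_le_card_nstates[of Al N' "card (nstates N)" x y] mem fool by auto
  qed
  then show ?thesis
    unfolding star_free_realizable_def
    using assms(1,2) sf subset_dfa_minimal[OF wf family reach dist]
      dfa_lang_subset_dfa[OF wf family] card_dstates_subset_dfa[OF wf family] by blast
qed

definition unary_nfa :: "nat \<Rightarrow> (nat, nat) nfa" where
  "unary_nfa m = \<lparr>nstates = {..m}, ninit = 0, ndelta = (\<lambda>q a. {min (Suc q) m}), nfinal = {m}\<rparr>"

lemma unary_nfa_simps [simp]:
  "nstates (unary_nfa m) = {..m}" "ninit (unary_nfa m) = 0" "nfinal (unary_nfa m) = {m}"
  by (simp_all add: unary_nfa_def)

lemma nfa_steps_unary_nfa:
  "q \<le> m \<Longrightarrow> nfa_steps (unary_nfa m) {q} w = {min (q + length w) m}"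
  by (induction w arbitrary: q) (auto simp: unary_nfa_def min_def)

lemma nfa_accepts_from_unary_nfa:
  "q \<le> m \<Longrightarrow> nfa_accepts_from (unary_nfa m) {q} w \<longleftrightarrow> m \<le> q + length w"
  by (auto simp: nfa_accepts_from_def nfa_steps_unary_nfa)

lemma nfa_lang_unary_nfa: "nfa_lang {0} (unary_nfa m) = conc {replicate m 0} (lists {0})"
proof -
  have "m \<le> length w \<longleftrightarrow> (\<exists>v\<in>lists {0}. w = replicate m 0 @ v)" if "w \<in> lists {0}" for w
  proof
    assume "m \<le> length w"
    moreover have "take m w = replicate (length (take m w)) 0"
      using that by (intro replicate_length_same[symmetric]) (auto dest: in_set_takeD)
    ultimately have "w = replicate m 0 @ drop m w"
      by (metis append_take_drop_id length_take min_absorb2)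
    moreover have "drop m w \<in> lists {0}" using that by (auto dest: in_set_dropD)
    ultimately show "\<exists>v\<in>lists {0}. w = replicate m 0 @ v" by blast
  qed auto
  then show ?thesis by (auto simp: nfa_lang_accepts_from nfa_accepts_from_unary_nfa conc_def)
qed

lemma star_free_realizable_diagonal: "star_free_realizable (Suc m) (Suc m)"
proof -
  let ?N = "unary_nfa m" and ?R = "(\<lambda>i. {i}) ` {..m}"
  have card: "card (nstates ?N) = Suc m" "card ?R = Suc m"
    by (simp_all add: card_image)
  have acc: "replicate i 0 @ replicate (m - j) 0 \<in> nfa_lang {0} ?N \<longleftrightarrow> j \<le> i"
    if "j \<le> m" for i j
    using that by (auto simp: nfa_lang_accepts_from nfa_accepts_from_unary_nfa)
  have "star_free_realizable (card (nstates ?N)) (card ?R)"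
  proof (rule star_free_realizableI[where x = "\<lambda>i. replicate i 0" and y = "\<lambda>j. replicate (m - j) 0"])
    show "nfa_wf {0} ?N" by (auto simp: nfa_wf_def unary_nfa_def)
    show "star_free {0} (nfa_lang {0} ?N)"
      unfolding nfa_lang_unary_nfa by (intro sf_conc star_free_singleton star_free_lists) auto
    show "replicate i 0 @ replicate (m - i) 0 \<in> nfa_lang {0} ?N" if "i < card (nstates ?N)" for i
      using acc that card by simp
    show "replicate i 0 @ replicate (m - j) 0 \<notin> nfa_lang {0} ?N
        \<or> replicate j 0 @ replicate (m - i) 0 \<notin> nfa_lang {0} ?N"
      if "i < card (nstates ?N)" "j < card (nstates ?N)" "i \<noteq> j" for i j
      using acc that card by auto
    show "(\<Union>q\<in>T. ndelta ?N q a) \<in> ?R" if "T \<in> ?R" for T a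
      using that by (auto simp: unary_nfa_def)
    show "\<exists>w\<in>lists {0}. nfa_steps ?N {ninit ?N} w = T" if "T \<in> ?R" for T
    proof -
      obtain i where "i \<le> m" "T = {i}" using \<open>T \<in> ?R\<close> by blast
      then show ?thesis
        by (intro bexI[of _ "replicate i 0"]) (auto simp: nfa_steps_unary_nfa)
    qed
    show "\<exists>z\<in>lists {0}. nfa_accepts_from ?N T z \<noteq> nfa_accepts_from ?N T' z"
      if "T \<in> ?R" "T' \<in> ?R" "T \<noteq> T'" for T T'
    proof -
      obtain i j where "i \<le> m" "j \<le> m" "i \<noteq> j" "T = {i}" "T' = {j}"
        using \<open>T \<in> ?R\<close> \<open>T' \<in> ?R\<close> \<open>T \<noteq> T'\<close> by blast
      then show ?thesis
        by (intro bexI[of _ "replicate (m - max i j) 0"])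
          (auto simp: nfa_accepts_from_unary_nfa max_def)
    qed
  qed auto
  then show ?thesis by (simp only: card)
qed

definition subset_letter :: "nat \<Rightarrow> nat set \<Rightarrow> nat" where
  "subset_letter m S = Suc m + set_encode S"

text \<open>Letter m has no transitions at all; it is there to make the empty set reachable.\<close>
definition blowup_alphabet :: "nat \<Rightarrow> nat set set \<Rightarrow> nat set" where
  "blowup_alphabet m F = {..m} \<union> subset_letter m ` F"

definition blowup_nfa :: "nat \<Rightarrow> (nat, nat) nfa" where
  "blowup_nfa m = \<lparr>nstates = {..m}, ninit = 0,
     ndelta = (\<lambda>q a. if a < m \<and> q = a then {Suc a}
                     else if m < a \<and> q = 0 then set_decode (a - Suc m) else {}),
     nfinal = {m}\<rparr>"

definition blowup_sets :: "nat \<Rightarrow> nat set set \<Rightarrow> nat set set" where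
  "blowup_sets m F = insert {} ((\<lambda>i. {i}) ` {..m} \<union> F)"

lemma blowup_nfa_simps [simp]:
  "nstates (blowup_nfa m) = {..m}" "ninit (blowup_nfa m) = 0" "nfinal (blowup_nfa m) = {m}"
  by (simp_all add: blowup_nfa_def)

lemma ndelta_blowup_nfa_chain:
  "a \<le> m \<Longrightarrow> ndelta (blowup_nfa m) q a = (if a < m \<and> q = a then {Suc a} else {})"
  by (simp add: blowup_nfa_def)

lemma ndelta_blowup_nfa_subset_letter:
  "finite S \<Longrightarrow> ndelta (blowup_nfa m) q (subset_letter m S) = (if q = 0 then S else {})"
  by (simp add: blowup_nfa_def subset_letter_def)

lemma nfa_steps_blowup_nfa_upt:
  "i \<le> j \<Longrightarrow> j \<le> m \<Longrightarrow> nfa_steps (blowup_nfa m) {i} [i..<j] = {j}"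
proof (induction j)
  case (Suc j)
  show ?case
  proof (cases "i = Suc j")
    case False
    then have "nfa_steps (blowup_nfa m) {i} [i..<Suc j] = nfa_steps (blowup_nfa m) {j} [j]"
      using Suc by (simp add: nfa_steps_append)
    then show ?thesis using Suc.prems by (simp add: ndelta_blowup_nfa_chain)
  qed simp
qed simp

lemma nfa_accepts_from_blowup_nfa_upt:
  assumes "i \<le> m"
  shows "nfa_accepts_from (blowup_nfa m) {q} [i..<m] \<longleftrightarrow> q = i"
proof (cases "i = m")
  case False
  then have "[i..<m] = i # [Suc i..<m]" using assms by (simp add: upt_conv_Cons)
  moreover have "nfa_accepts_from (blowup_nfa m) {Suc i} [Suc i..<m]"
    using False assms by (simp add: nfa_accepts_from_def nfa_steps_blowup_nfa_upt)
  ultimately show ?thesis using False assms by (auto simp: ndelta_blowup_nfa_chain)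
qed auto

text \<open>Only the initial state has transitions on the subset letters, so a run from any other
  state q must follow the chain q, q + 1, ..., m.\<close>
lemma nfa_accepts_from_blowup_nfa_nonzero:
  "0 < q \<Longrightarrow> nfa_accepts_from (blowup_nfa m) {q} w \<Longrightarrow> w = [q..<m]"
proof (induction w arbitrary: q)
  case (Cons a w)
  then have "a < m" "q = a" "nfa_accepts_from (blowup_nfa m) {Suc a} w"
    by (auto simp: blowup_nfa_def split: if_splits)
  with Cons.IH show ?case by (simp add: upt_conv_Cons)
qed auto

lemma upt_in_lists_blowup_alphabet: "j \<le> Suc m \<Longrightarrow> [i..<j] \<in> lists (blowup_alphabet m F)"
  by (auto simp: blowup_alphabet_def)

context
  fixes m :: nat and F :: "nat set set"
  assumes F: "F \<subseteq> Pow {..m}"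
begin

lemma finite_of_F: "S \<in> F \<Longrightarrow> finite S"
  using F by (auto intro: finite_subset)

lemma finite_blowup_alphabet: "finite (blowup_alphabet m F)"
  using finite_subset[OF F] by (simp add: blowup_alphabet_def)

lemma nfa_wf_blowup_nfa: "nfa_wf (blowup_alphabet m F) (blowup_nfa m)"
proof -
  have "ndelta (blowup_nfa m) q a \<subseteq> {..m}" if letter: "a \<in> blowup_alphabet m F" for q a
  proof (cases "a \<le> m")
    case False
    then obtain S where "S \<in> F" "a = subset_letter m S"
      using letter by (auto simp: blowup_alphabet_def)
    then show ?thesis using F finite_of_F by (auto simp: ndelta_blowup_nfa_subset_letter)
  qed (auto simp: ndelta_blowup_nfa_chain)
  then show ?thesis by (auto simp: nfa_wf_def)
qed

lemma blowup_sets_closed: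
  assumes "T \<in> blowup_sets m F" "a \<in> blowup_alphabet m F"
  shows "(\<Union>q\<in>T. ndelta (blowup_nfa m) q a) \<in> blowup_sets m F"
proof (cases "a \<le> m")
  case True
  then have "(\<Union>q\<in>T. ndelta (blowup_nfa m) q a) = (if a \<in> T \<and> a < m then {Suc a} else {})"
    by (auto simp: ndelta_blowup_nfa_chain)
  then show ?thesis by (simp add: blowup_sets_def)
next
  case False
  then obtain S where "S \<in> F" "a = subset_letter m S"
    using assms(2) by (auto simp: blowup_alphabet_def)
  then have "(\<Union>q\<in>T. ndelta (blowup_nfa m) q a) = (if 0 \<in> T then S else {})"
    using finite_of_F by (auto simp: ndelta_blowup_nfa_subset_letter)
  then show ?thesis using \<open>S \<in> F\<close> by (simp add: blowup_sets_def)
qed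

lemma blowup_sets_reachable:
  assumes "T \<in> blowup_sets m F"
  shows "\<exists>w\<in>lists (blowup_alphabet m F). nfa_steps (blowup_nfa m) {0} w = T"
proof -
  consider "T = {}" | i where "i \<le> m" "T = {i}" | "T \<in> F"
    using assms by (auto simp: blowup_sets_def)
  then show ?thesis
  proof cases
    case 1
    then show ?thesis
      by (intro bexI[of _ "[m]"]) (auto simp: ndelta_blowup_nfa_chain blowup_alphabet_def)
  next
    case 2
    then show ?thesis
      using nfa_steps_blowup_nfa_upt[of 0 i m] upt_in_lists_blowup_alphabet[of i m 0] by auto
  next
    case 3
    then show ?thesis using finite_of_F
      by (intro bexI[of _ "[subset_letter m T]"])
        (auto simp: ndelta_blowup_nfa_subset_letter blowup_alphabet_def)
  qed
qed

lemma blowup_sets_distinguishable: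
  assumes "T \<in> blowup_sets m F" "T' \<in> blowup_sets m F" "T \<noteq> T'"
  shows "\<exists>z\<in>lists (blowup_alphabet m F).
    nfa_accepts_from (blowup_nfa m) T z \<noteq> nfa_accepts_from (blowup_nfa m) T' z"
proof -
  have subset: "T \<subseteq> {..m}" "T' \<subseteq> {..m}"
    using assms(1,2) F by (auto simp: blowup_sets_def)
  obtain i where "i \<in> T \<longleftrightarrow> i \<notin> T'" using assms(3) by blast
  then have "i \<le> m" using subset by auto
  have "nfa_accepts_from (blowup_nfa m) U [i..<m] \<longleftrightarrow> i \<in> U" for U
    by (simp add: nfa_accepts_from_iff[of _ U] nfa_accepts_from_blowup_nfa_upt[OF \<open>i \<le> m\<close>])
  then show ?thesis
    using \<open>i \<in> T \<longleftrightarrow> i \<notin> T'\<close> upt_in_lists_blowup_alphabet[of m m i]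
    by (intro bexI[of _ "[i..<m]"]) auto
qed

lemma star_free_blowup_nfa:
  "star_free (blowup_alphabet m F) (nfa_lang (blowup_alphabet m F) (blowup_nfa m))"
proof (rule star_free_nfa_lang_if_finite_from_others)
  show "blowup_alphabet m F \<noteq> {}" by (auto simp: blowup_alphabet_def)
  fix q assume "q \<in> nstates (blowup_nfa m)" "q \<noteq> ninit (blowup_nfa m)"
  then have "{w \<in> lists (blowup_alphabet m F). nfa_accepts_from (blowup_nfa m) {q} w}
      \<subseteq> {[q..<m]}"
    using nfa_accepts_from_blowup_nfa_nonzero by auto
  then show "finite {w \<in> lists (blowup_alphabet m F). nfa_accepts_from (blowup_nfa m) {q} w}"
    by (rule finite_subset) simp
qed (rule finite_blowup_alphabet nfa_wf_blowup_nfa)+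

end

lemma card_blowup_sets:
  assumes "finite F" "\<And>S. S \<in> F \<Longrightarrow> 2 \<le> card S"
  shows "card (blowup_sets m F) = Suc m + 1 + card F"
proof -
  have "{} \<notin> (\<lambda>i. {i}) ` {..m} \<union> F" "(\<lambda>i. {i}) ` {..m} \<inter> F = {}"
    using assms(2) by fastforce+
  then show ?thesis
    using assms(1) by (simp add: blowup_sets_def card_Un_disjoint card_image)
qed

lemma star_free_realizable_blowup:
  assumes "F \<subseteq> Pow {..m}" "\<And>S. S \<in> F \<Longrightarrow> 2 \<le> card S"
  shows "star_free_realizable (Suc m) (Suc m + 1 + card F)"
proof -
  let ?Al = "blowup_alphabet m F" and ?N = "blowup_nfa m"
  have "finite F" using assms(1) by (rule finite_subset) simp
  have acc: "[0..<i] @ [j..<m] \<in> nfa_lang ?Al ?N \<longleftrightarrow> i = j" if "i \<le> m" "j \<le> m" for i j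
    using that upt_in_lists_blowup_alphabet
    by (simp add: nfa_lang_accepts_from nfa_accepts_from_append nfa_steps_blowup_nfa_upt
        nfa_accepts_from_blowup_nfa_upt)
  have "star_free_realizable (card (nstates ?N)) (card (blowup_sets m F))"
  proof (rule star_free_realizableI[where x = "\<lambda>i. [0..<i]" and y = "\<lambda>j. [j..<m]"])
    show "nfa_wf ?Al ?N" "star_free ?Al (nfa_lang ?Al ?N)" "finite ?Al"
      using assms(1) by (rule nfa_wf_blowup_nfa star_free_blowup_nfa finite_blowup_alphabet)+
    show "(\<Union>q\<in>T. ndelta ?N q a) \<in> blowup_sets m F" if "T \<in> blowup_sets m F" "a \<in> ?Al" for T a
      using assms(1) that by (rule blowup_sets_closed)
    show "\<exists>w\<in>lists ?Al. nfa_steps ?N {ninit ?N} w = T" if "T \<in> blowup_sets m F" for T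
      using blowup_sets_reachable[OF assms(1) that] by simp
    show "\<exists>z\<in>lists ?Al. nfa_accepts_from ?N T z \<noteq> nfa_accepts_from ?N T' z"
      if "T \<in> blowup_sets m F" "T' \<in> blowup_sets m F" "T \<noteq> T'" for T T'
      using assms(1) that by (rule blowup_sets_distinguishable)
  qed (use acc assms in \<open>auto simp: blowup_sets_def blowup_alphabet_def\<close>)
  then show ?thesis using card_blowup_sets[OF \<open>finite F\<close> assms(2)] by simp
qed

lemma card_Pow_le_card_subsets_ge_2:
  assumes "finite A"
  shows "2 ^ card A \<le> Suc (card A) + card {S \<in> Pow A. 2 \<le> card S}"
proof -
  let ?small = "insert {} ((\<lambda>a. {a}) ` A)" and ?big = "{S \<in> Pow A. 2 \<le> card S}"
  have "Pow A \<subseteq> ?small \<union> ?big"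
  proof
    fix S assume "S \<in> Pow A"
    then have "finite S" using assms by (auto intro: finite_subset)
    then consider "card S = 0" | "card S = 1" | "2 \<le> card S" by linarith
    then show "S \<in> ?small \<union> ?big"
      using \<open>S \<in> Pow A\<close> \<open>finite S\<close> by cases (auto simp: card_1_singleton_iff)
  qed
  then have "card (Pow A) \<le> card (?small \<union> ?big)"
    using assms by (intro card_mono) auto
  also have "\<dots> \<le> card ?small + card ?big" by (rule card_Un_le)
  also have "card ?small \<le> Suc (card ((\<lambda>a. {a}) ` A))"
    using assms by (simp add: card_insert_if)
  also have "card ((\<lambda>a. {a}) ` A) \<le> card A" using assms by (rule card_image_le)
  finally show ?thesis using assms by (simp add: card_Pow)
qed

theorem mainTheorem2:
  fixes n \<alpha> :: nat
  assumes "1 \<le> n" and "n \<le> \<alpha>" and "\<alpha> \<le> 2 ^ n"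
  shows "\<exists>(Al :: nat set) (N :: (nat, nat) nfa) (D :: (nat, nat) dfa).
           finite Al \<and> Al \<noteq> {} \<and>
           nfa_minimal Al N \<and> card (nstates N) = n \<and>
           star_free Al (nfa_lang Al N) \<and>
           dfa_minimal Al D \<and> dfa_lang Al D = nfa_lang Al N \<and>
           card (dstates D) = \<alpha>"
proof -
  obtain m where n: "n = Suc m" using assms(1) by (metis Suc_le_D One_nat_def)
  have "star_free_realizable n \<alpha>"
  proof (cases "\<alpha> = n")
    case True
    then show ?thesis using star_free_realizable_diagonal n by simp
  next
    case False
    have "\<alpha> - n - 1 \<le> card {S \<in> Pow {..m}. 2 \<le> card S}"
      using card_Pow_le_card_subsets_ge_2[of "{..m}"] assms(3) n by simp
    then obtain F where F: "F \<subseteq> {S \<in> Pow {..m}. 2 \<le> card S}" "card F = \<alpha> - n - 1"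
      by (rule obtain_subset_with_card_n)
    have "star_free_realizable n (n + 1 + card F)"
      using star_free_realizable_blowup[of F m] F(1) n by auto
    moreover have "n + 1 + card F = \<alpha>" using F(2) False assms(2) by linarith
    ultimately show ?thesis by simp
  qed
  then show ?thesis unfolding star_free_realizable_def .
qed

end
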